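(* (1) For every $\lambda\neq0$, the determinant of the matrix $$\begin{pmatrix} i\widetilde v_s^*(\lambda)/\lambda & \widetilde v_d^*(\lambda)/\lambda^2 & 1+i\alpha m(\lambda)/\lambda^2\\ 1-c(i\lambda l) & i s(i\lambda l)/\lambda & -\frac{\alpha}{\lambda}\int_0^l s(i\lambda(l-t))v(t)\,dt\\ i s(i\lambda l)/\lambda & d(i\lambda l)/\lambda^2 & \frac{i\alpha}{\lambda^2}\int_0^l d(i\lambda(l-t))v(t)\,dt\end{pmatrix}$$ (the coefficient matrix of the linear system for the unknowns $y'(0)$, $y''(0)$-type constants and $\langle y,v\rangle$ expressing that a solution of $L_\alpha y=\lambda^3 y$ with $y(0)=0$ satisfies $y'(0)=y'(l)$, $y(l)=0$) equals $$\Delta(\alpha,\lambda)=\Delta(0,\lambda)+\frac{i\alpha}{\lambda^4}\big(F(\lambda)-F^*(\lambda)\big).$$ (2) $\Delta(\alpha,\cdot)$ extends to an entire function of exponential type satisfying $\Delta(\alpha,\zeta_2\lambda)=\Delta(\alpha,\lambda)$ and $\Delta^*(\alpha,\lambda)=\Delta(\alpha,\lambda)$ for all $\lambda\in\mathbb C$.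
   Context: Let $\zeta_1=1$, $\zeta_2=-\frac12+\frac{\sqrt3}{2}i$, $\zeta_3=-\frac12-\frac{\sqrt3}{2}i$; $c(z)=\frac13\sum_k e^{z\zeta_k}$, $s(z)=\frac13\sum_k\zeta_k^{-1}e^{z\zeta_k}$, $d(z)=\frac13\sum_k\zeta_k^{-2}e^{z\zeta_k}$. Fix $0<l<\infty$, $\alpha\in\mathbb R$, $v\in L^2(0,l)$. $L_\alpha$ is the operator in $L^2(0,l)$, $(L_\alpha y)(x)=iy'''(x)+\alpha\left(\int_0^l y(t)\overline{v(t)}dt\right)v(x)$, with domain $\{y\in W^{3,2}(0,l): y(0)=0,\ y'(0)=y'(l),\ y(l)=0\}$. $\Delta(0,\lambda)=\lambda^{-2}(d(i\lambda l)+d(-i\lambda l))$. For entire $f$, $f^*(\lambda)=\overline{f(\overline\lambda)}$. $\widetilde v_c(\lambda)=\int_0^l v(x)c(-i\lambda x)dx$, $\widetilde v_s(\lambda)=\int_0^l v(x)s(-i\lambda x)dx$, $\widetilde v_d(\lambda)=\int_0^l v(x)d(-i\lambda x)dx$; $m(\lambda)=\int_0^l\overline{v(x)}\int_0^x d(i\lambda(x-t))v(t)\,dt\,dx$. Let $w(x)=v(l-x)$ and $\widetilde w_d(\lambda)=\int_0^l w(x)d(-i\lambda x)dx$, so that $\widetilde w_d^*(-\lambda)=\int_0^l\overline{v(t)}\,d(i\lambda(t-l))\,dt$. Define $F(\lambda)=m(\lambda)d(i\lambda l)+\widetilde v_d(\lambda)\widetilde w_d^*(-\lambda)$. *)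

theory Defs
  imports "HOL-Analysis.Analysis"
begin

definition zeta1 :: complex where "zeta1 = 1"
definition zeta2 :: complex where "zeta2 = Complex (-1/2) (sqrt 3 / 2)"
definition zeta3 :: complex where "zeta3 = Complex (-1/2) (- sqrt 3 / 2)"

definition cfun :: "complex \<Rightarrow> complex" where
  "cfun z = (exp (z * zeta1) + exp (z * zeta2) + exp (z * zeta3)) / 3"
definition sfun :: "complex \<Rightarrow> complex" where
  "sfun z = (inverse zeta1 * exp (z * zeta1) + inverse zeta2 * exp (z * zeta2)
             + inverse zeta3 * exp (z * zeta3)) / 3"
definition dfun :: "complex \<Rightarrow> complex" where
  "dfun z = (inverse (zeta1^2) * exp (z * zeta1) + inverse (zeta2^2) * exp (z * zeta2)
             + inverse (zeta3^2) * exp (z * zeta3)) / 3"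

definition star :: "(complex \<Rightarrow> complex) \<Rightarrow> complex \<Rightarrow> complex" where
  "star f z = cnj (f (cnj z))"

definition Delta0 :: "real \<Rightarrow> complex \<Rightarrow> complex" where
  "Delta0 l z = (dfun (\<i> * z * l) + dfun (- \<i> * z * l)) / z^2"

definition vc :: "real \<Rightarrow> (real \<Rightarrow> complex) \<Rightarrow> complex \<Rightarrow> complex" where
  "vc l v z = (LINT x:{0..l}|lborel. v x * cfun (- \<i> * z * x))"
definition vs :: "real \<Rightarrow> (real \<Rightarrow> complex) \<Rightarrow> complex \<Rightarrow> complex" where
  "vs l v z = (LINT x:{0..l}|lborel. v x * sfun (- \<i> * z * x))"
definition vd :: "real \<Rightarrow> (real \<Rightarrow> complex) \<Rightarrow> complex \<Rightarrow> complex" where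
  "vd l v z = (LINT x:{0..l}|lborel. v x * dfun (- \<i> * z * x))"

definition mfun :: "real \<Rightarrow> (real \<Rightarrow> complex) \<Rightarrow> complex \<Rightarrow> complex" where
  "mfun l v z = (LINT x:{0..l}|lborel. cnj (v x) *
                   (LINT t:{0..x}|lborel. dfun (\<i> * z * (x - t)) * v t))"

definition wd :: "real \<Rightarrow> (real \<Rightarrow> complex) \<Rightarrow> complex \<Rightarrow> complex" where
  "wd l v z = vd l (\<lambda>x. v (l - x)) z"

definition Ffun :: "real \<Rightarrow> (real \<Rightarrow> complex) \<Rightarrow> complex \<Rightarrow> complex" where
  "Ffun l v z = mfun l v z * dfun (\<i> * z * l) + vd l v z * star (wd l v) (- z)"

definition Delta :: "real \<Rightarrow> (real \<Rightarrow> complex) \<Rightarrow> real \<Rightarrow> complex \<Rightarrow> complex" where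
  "Delta l v \<alpha> z = Delta0 l z + \<i> * \<alpha> / z^4 * (Ffun l v z - star (Ffun l v) z)"

definition coeff_matrix :: "real \<Rightarrow> (real \<Rightarrow> complex) \<Rightarrow> real \<Rightarrow> complex \<Rightarrow> complex^3^3" where
  "coeff_matrix l v \<alpha> z = vector [
     vector [\<i> * star (vs l v) z / z, star (vd l v) z / z^2, 1 + \<i> * \<alpha> * mfun l v z / z^2],
     vector [1 - cfun (\<i> * z * l), \<i> * sfun (\<i> * z * l) / z,
             - (\<alpha> / z) * (LINT t:{0..l}|lborel. sfun (\<i> * z * (l - t)) * v t)],
     vector [\<i> * sfun (\<i> * z * l) / z, dfun (\<i> * z * l) / z^2,
             \<i> * \<alpha> / z^2 * (LINT t:{0..l}|lborel. dfun (\<i> * z * (l - t)) * v t)]]"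

end

(*
  The functions c, s, d satisfy addition theorems and inversion formulas such as
  d(u + u') = c(u) d(u') + d(u) c(u') + s(u) s(u') and d(-w) = s(w)^2 - c(w) d(w).
  Under the integral sign they rewrite the last column of the matrix, the transforms of w, and
  m + m^* (the integral of d(i lambda (x - t)) over the whole square) in terms of the transforms
  of v, after which (1) is an identity between rational functions.

  For (2): m, the d-transform of v, lambda |-> w_d^*(-lambda) and d(i lambda l) are integrals of d
  against bounded kernels, hence entire of exponential type with f(zeta z) = zeta^2 f(z).  This
  rotation law forces f(0) = f'(0) = 0, so f(z) = z^2 h(z) with h entire, rotation invariant and
  of exponential type.  Hence F = lambda^4 P and Delta(0, .) = Q off 0 with P, Q of that kind, and
  Q + i alpha (P - star P) is the required extension; it is invariant under star off 0 because
  Delta is, and at 0 by continuity.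
*)
theory Submission
  imports Defs "HOL-Complex_Analysis.Complex_Analysis"
begin

section \<open>The functions c, s, d\<close>

abbreviation "\<zeta> \<equiv> zeta2"

lemma zeta2_sq: "\<zeta>^2 = zeta3"
  by (simp add: zeta2_def zeta3_def power2_eq_square complex_eq_iff field_simps)

lemma zeta2_root: "\<zeta>^2 + \<zeta> + 1 = 0"
  by (simp add: zeta2_def power2_eq_square complex_eq_iff field_simps)

lemma zeta2_cube: "\<zeta>^3 = 1"
  using zeta2_root by algebra

lemma zeta2_pow4: "\<zeta>^4 = \<zeta>"
  using zeta2_cube by algebra

lemma zeta2_neq_0: "\<zeta> \<noteq> 0"
  using zeta2_cube by auto

lemma zeta2_neq_1: "\<zeta> \<noteq> 1"
  using zeta2_root by auto

lemma zeta2_sq_neq: "\<zeta>^2 \<noteq> \<zeta>" "\<zeta>^2 \<noteq> 1"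
  using zeta2_root zeta2_neq_1 by algebra+

lemma norm_zeta2: "norm \<zeta> = 1"
  by (simp add: zeta2_def cmod_def power2_eq_square)

lemma cnj_zeta2: "cnj \<zeta> = \<zeta>^2"
  by (simp add: zeta2_def power2_eq_square complex_eq_iff field_simps)

lemma cnj_zeta2_sq: "cnj (\<zeta>^2) = \<zeta>"
  by (simp add: cnj_zeta2 zeta2_pow4 flip: power_mult)

lemma cfun_altdef: "cfun w = (exp w + exp (w*\<zeta>) + exp (w*\<zeta>^2)) / 3"
  by (simp add: cfun_def zeta1_def zeta2_sq)

lemma sfun_altdef: "sfun w = (exp w + \<zeta>^2 * exp (w*\<zeta>) + \<zeta> * exp (w*\<zeta>^2)) / 3"
proof -
  have "inverse \<zeta> = \<zeta>^2" "inverse (\<zeta>^2) = \<zeta>"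
    using zeta2_cube by (auto intro!: inverse_unique) algebra+
  then show ?thesis
    by (simp add: sfun_def zeta1_def flip: zeta2_sq)
qed

lemma dfun_altdef: "dfun w = (exp w + \<zeta> * exp (w*\<zeta>) + \<zeta>^2 * exp (w*\<zeta>^2)) / 3"
proof -
  have "inverse (\<zeta>^2) = \<zeta>" "inverse ((\<zeta>^2)^2) = \<zeta>^2"
    using zeta2_cube by (auto intro!: inverse_unique) algebra+
  then show ?thesis
    by (simp add: dfun_def zeta1_def flip: zeta2_sq)
qed

lemmas cube_root_altdefs = cfun_altdef sfun_altdef dfun_altdef

lemma sfun_add: "sfun (u + u') = cfun u * sfun u' + sfun u * cfun u' + dfun u * dfun u'"
  and dfun_add: "dfun (u + u') = cfun u * dfun u' + dfun u * cfun u' + sfun u * sfun u'"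
proof -
  define t where "t = inverse (3::complex)"
  have facts: "\<zeta>^2 + \<zeta> + 1 = 0" "3 * t = 1"
    by (simp_all add: zeta2_root t_def)
  show "sfun (u + u') = cfun u * sfun u' + sfun u * cfun u' + dfun u * dfun u'"
    unfolding cube_root_altdefs distrib_right exp_add divide_inverse t_def[symmetric]
    using facts by algebra
  show "dfun (u + u') = cfun u * dfun u' + dfun u * cfun u' + sfun u * sfun u'"
    unfolding cube_root_altdefs distrib_right exp_add divide_inverse t_def[symmetric]
    using facts by algebra
qed

text \<open>Each of the exponents \<open>-w\<close>, \<open>-w\<zeta>\<close>, \<open>-w\<zeta>\<^sup>2\<close> is the sum of the two others with
  the sign reversed, since \<open>1 + \<zeta> + \<zeta>\<^sup>2 = 0\<close>.\<close>
lemma cfun_minus: "cfun (-w) = cfun w ^ 2 - sfun w * dfun w"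
  and sfun_minus: "sfun (-w) = dfun w ^ 2 - cfun w * sfun w"
  and dfun_minus: "dfun (-w) = sfun w ^ 2 - cfun w * dfun w"
proof -
  have "-w = w*\<zeta> + w*\<zeta>^2" "(-w)*\<zeta> = w + w*\<zeta>^2" "(-w)*\<zeta>^2 = w + w*\<zeta>"
    using zeta2_root by (algebra, algebra, algebra)
  then have e: "exp (-w) = exp (w*\<zeta>) * exp (w*\<zeta>^2)" "exp ((-w)*\<zeta>) = exp w * exp (w*\<zeta>^2)"
    "exp ((-w)*\<zeta>^2) = exp w * exp (w*\<zeta>)"
    by (metis exp_add)+
  define t where "t = inverse (3::complex)"
  have facts: "\<zeta>^2 + \<zeta> + 1 = 0" "3 * t = 1"
    by (simp_all add: zeta2_root t_def)
  show "cfun (-w) = cfun w ^ 2 - sfun w * dfun w"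
    unfolding cube_root_altdefs divide_inverse e t_def[symmetric] using facts by algebra
  show "sfun (-w) = dfun w ^ 2 - cfun w * sfun w"
    unfolding cube_root_altdefs divide_inverse e t_def[symmetric] using facts by algebra
  show "dfun (-w) = sfun w ^ 2 - cfun w * dfun w"
    unfolding cube_root_altdefs divide_inverse e t_def[symmetric] using facts by algebra
qed

lemma sfun_cnj: "cnj (sfun (cnj w)) = sfun w"
  and dfun_cnj: "cnj (dfun (cnj w)) = dfun w"
proof -
  have "cnj (exp (cnj w)) = exp w" "cnj (exp (cnj w * \<zeta>)) = exp (w*\<zeta>^2)"
    "cnj (exp (cnj w * \<zeta>^2)) = exp (w*\<zeta>)"
    by (simp_all only: exp_cnj complex_cnj_mult complex_cnj_cnj cnj_zeta2 cnj_zeta2_sq)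
  then show "cnj (sfun (cnj w)) = sfun w" "cnj (dfun (cnj w)) = dfun w"
    unfolding cube_root_altdefs
    by (simp_all add: cnj_zeta2 cnj_zeta2_sq zeta2_pow4 algebra_simps)
qed

lemma dfun_rotate: "dfun (\<zeta>*w) = \<zeta>^2 * dfun w"
proof -
  have "(\<zeta>*w)*\<zeta>^2 = w"
    using zeta2_cube by algebra
  then have e: "exp (\<zeta>*w) = exp (w*\<zeta>)" "exp ((\<zeta>*w)*\<zeta>) = exp (w*\<zeta>^2)" "exp ((\<zeta>*w)*\<zeta>^2) = exp w"
    by (simp add: mult.commute, simp add: power2_eq_square mult_ac, simp only:)
  show ?thesis
    unfolding dfun_altdef divide_inverse e using zeta2_root by algebra
qed

lemma dfun_0: "dfun 0 = 0"
  unfolding dfun_altdef using zeta2_root by (simp add: algebra_simps)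

lemma norm_cfun_le: "norm (cfun u) \<le> exp (norm u)"
  and norm_sfun_le: "norm (sfun u) \<le> exp (norm u)"
  and norm_dfun_le: "norm (dfun u) \<le> exp (norm u)"
proof -
  have e: "norm (exp u) \<le> exp (norm u)" "norm (exp (u*\<zeta>)) \<le> exp (norm u)"
    "norm (exp (u*\<zeta>^2)) \<le> exp (norm u)"
    using norm_exp[of u] norm_exp[of "u*\<zeta>"] norm_exp[of "u*\<zeta>^2"]
    by (simp_all add: norm_mult norm_power norm_zeta2)
  have tri: "norm ((a + b + c) / 3) \<le> exp (norm u)"
    if "norm a \<le> exp (norm u)" "norm b \<le> exp (norm u)" "norm c \<le> exp (norm u)" for a b c :: complex
    using norm_triangle_ineq[of "a + b" c] norm_triangle_ineq[of a b] that
    by (simp add: norm_divide)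
  show "norm (cfun u) \<le> exp (norm u)"
    unfolding cfun_altdef by (rule tri) (use e in \<open>simp_all add: norm_mult norm_power norm_zeta2\<close>)
  show "norm (sfun u) \<le> exp (norm u)"
    unfolding sfun_altdef by (rule tri) (use e in \<open>simp_all add: norm_mult norm_power norm_zeta2\<close>)
  show "norm (dfun u) \<le> exp (norm u)"
    unfolding dfun_altdef by (rule tri) (use e in \<open>simp_all add: norm_mult norm_power norm_zeta2\<close>)
qed

lemma continuous_on_cfun: "continuous_on UNIV cfun"
  and continuous_on_sfun: "continuous_on UNIV sfun"
  and continuous_on_dfun: "continuous_on UNIV dfun"
  unfolding cfun_def sfun_def dfun_def by (intro continuous_intros; simp)+

lemma borel_measurable_cfun[measurable]: "cfun \<in> borel_measurable borel"
  and borel_measurable_sfun[measurable]: "sfun \<in> borel_measurable borel"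
  and borel_measurable_dfun[measurable]: "dfun \<in> borel_measurable borel"
  by (auto intro: borel_measurable_continuous_onI continuous_on_cfun continuous_on_sfun continuous_on_dfun)

lemma holomorphic_on_dfun[holomorphic_intros]:
  "f holomorphic_on A \<Longrightarrow> (\<lambda>z. dfun (f z)) holomorphic_on A"
  unfolding dfun_def by (intro holomorphic_intros) (auto simp: zeta2_neq_0)

section \<open>Entire functions of exponential type\<close>

definition exponential_type :: "(complex \<Rightarrow> complex) \<Rightarrow> bool" where
  "exponential_type f \<longleftrightarrow> (\<exists>A B. \<forall>z. norm (f z) \<le> A * exp (B * norm z))"

lemma exponential_typeE:
  assumes "exponential_type f"
  obtains A B where "0 \<le> A" "0 \<le> B" "\<And>z. norm (f z) \<le> A * exp (B * norm z)"
proof -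
  obtain A B where AB: "\<And>z. norm (f z) \<le> A * exp (B * norm z)"
    using assms unfolding exponential_type_def by blast
  have "norm (f 0) \<le> A"
    using AB[of 0] by simp
  then have "0 \<le> A"
    using norm_ge_zero order_trans by blast
  have "norm (f z) \<le> A * exp (max B 0 * norm z)" for z
    using AB[of z] \<open>0 \<le> A\<close> mult_right_mono[OF max.cobounded1[of B 0] norm_ge_zero[of z]]
    by (meson exp_le_cancel_iff mult_left_mono order_trans)
  with \<open>0 \<le> A\<close> show ?thesis
    using that[of A "max B 0"] by simp
qed

lemma exponential_typeI: "(\<And>z. norm (f z) \<le> A * exp (B * norm z)) \<Longrightarrow> exponential_type f"
  unfolding exponential_type_def by blast

lemma exponential_type_triangle:
  assumes "exponential_type f" "exponential_type g" "\<And>z. norm (h z) \<le> norm (f z) + norm (g z)"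
  shows "exponential_type h"
proof -
  obtain A B A' B' where "0 \<le> A" "0 \<le> A'" "0 \<le> B" "0 \<le> B'"
    and f: "\<And>z. norm (f z) \<le> A * exp (B * norm z)" and g: "\<And>z. norm (g z) \<le> A' * exp (B' * norm z)"
    using assms(1,2) by (metis exponential_typeE)
  have "norm (h z) \<le> (A + A') * exp (max B B' * norm z)" for z
  proof -
    have "A * exp (B * norm z) \<le> A * exp (max B B' * norm z)"
      "A' * exp (B' * norm z) \<le> A' * exp (max B B' * norm z)"
      using \<open>0 \<le> A\<close> \<open>0 \<le> A'\<close> by (auto intro!: mult_left_mono mult_right_mono)
    then show ?thesis
      using assms(3)[of z] f[of z] g[of z] by (simp add: distrib_right)
  qed
  then show ?thesis
    by (rule exponential_typeI)
qed

lemma exponential_type_add: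
  "exponential_type f \<Longrightarrow> exponential_type g \<Longrightarrow> exponential_type (\<lambda>z. f z + g z)"
  using exponential_type_triangle[of f g "\<lambda>z. f z + g z"] norm_triangle_ineq by blast

lemma exponential_type_diff:
  "exponential_type f \<Longrightarrow> exponential_type g \<Longrightarrow> exponential_type (\<lambda>z. f z - g z)"
  using exponential_type_triangle[of f g "\<lambda>z. f z - g z"] norm_triangle_ineq4 by blast

lemma exponential_type_mult:
  assumes "exponential_type f" "exponential_type g"
  shows "exponential_type (\<lambda>z. f z * g z)"
proof -
  obtain A B A' B' where "0 \<le> A" "0 \<le> A'"
    and f: "\<And>z. norm (f z) \<le> A * exp (B * norm z)" and g: "\<And>z. norm (g z) \<le> A' * exp (B' * norm z)"
    using assms by (metis exponential_typeE)
  have "norm (f z * g z) \<le> (A * A') * exp ((B + B') * norm z)" for z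
    using mult_mono[OF f[of z] g[of z]] \<open>0 \<le> A\<close>
    by (simp add: norm_mult algebra_simps flip: exp_add)
  then show ?thesis
    by (rule exponential_typeI)
qed

lemma exponential_type_const: "exponential_type (\<lambda>z. c)"
  by (rule exponential_typeI[of _ "norm c" 0]) simp

lemma exponential_type_star: "exponential_type f \<Longrightarrow> exponential_type (star f)"
  unfolding exponential_type_def star_def by (metis complex_mod_cnj)

lemma exponential_type_of_square_factor:
  assumes f: "exponential_type f" and h: "continuous_on UNIV h"
    and fh: "\<And>z. f z = z^2 * h z"
  shows "exponential_type h"
proof -
  obtain A B where "0 \<le> B" and AB: "\<And>z. norm (f z) \<le> A * exp (B * norm z)"
    using f by (metis exponential_typeE)
  have "bounded (h ` cball 0 1)"
    by (rule compact_imp_bounded[OF compact_continuous_image[OF continuous_on_subset[OF h subset_UNIV] compact_cball]])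
  then obtain K where K: "\<And>z. z \<in> cball 0 1 \<Longrightarrow> norm (h z) \<le> K"
    unfolding bounded_iff by blast
  have "norm (h 0) \<le> K"
    by (rule K) simp
  then have "0 \<le> K"
    by (meson norm_ge_zero order_trans)
  have "norm (h z) \<le> max K A * exp (B * norm z)" for z
  proof (cases "norm z \<le> 1")
    case True
    have "norm (h z) \<le> max K A * 1"
      using K[of z] True by simp
    also have "\<dots> \<le> max K A * exp (B * norm z)"
      using \<open>0 \<le> B\<close> \<open>0 \<le> K\<close> by (intro mult_left_mono) auto
    finally show ?thesis .
  next
    case False
    have "norm (h z) = 1 * norm (h z)"
      by simp
    also have "\<dots> \<le> norm z ^ 2 * norm (h z)"
      using False by (intro mult_right_mono) simp_all
    also have "\<dots> \<le> A * exp (B * norm z)"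
      using AB[of z] by (simp add: fh norm_mult norm_power)
    also have "\<dots> \<le> max K A * exp (B * norm z)"
      by (intro mult_right_mono) auto
    finally show ?thesis .
  qed
  then show ?thesis
    by (rule exponential_typeI)
qed

lemma continuous_eq_at_point:
  fixes f g :: "'a::perfect_space \<Rightarrow> 'b::t2_space"
  assumes "continuous_on UNIV f" "continuous_on UNIV g" "\<And>z. z \<noteq> a \<Longrightarrow> f z = g z"
  shows "f a = g a"
proof -
  have f: "(f \<longlongrightarrow> f a) (at a)" and g: "(g \<longlongrightarrow> g a) (at a)"
    using assms(1,2) by (auto simp: continuous_on_def)
  have "\<forall>\<^sub>F z in at a. f z = g z"
    using assms(3) by (auto simp: eventually_at_filter)
  with f have "(g \<longlongrightarrow> f a) (at a)"
    by (rule Lim_transform_eventually)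
  then show ?thesis
    using g by (rule tendsto_unique[OF at_neq_bot])
qed

section \<open>Functions transforming like d under rotation\<close>

lemma holomorphic_on_star:
  assumes "f holomorphic_on UNIV"
  shows "star f holomorphic_on UNIV"
proof -
  have "f holomorphic_on cnj ` UNIV"
    using assms by (rule holomorphic_on_subset) simp
  then have "cnj \<circ> f \<circ> cnj holomorphic_on UNIV"
    by (rule holomorphic_on_compose_cnj_cnj) simp
  moreover have "star f = cnj \<circ> f \<circ> cnj"
    by (simp add: fun_eq_iff star_def)
  ultimately show ?thesis
    by simp
qed

lemma star_rotate:
  assumes "\<And>z. h (\<zeta> * z) = h z"
  shows "star h (\<zeta> * z) = star h z"
proof -
  have "cnj (\<zeta> * z) = \<zeta> * (\<zeta> * cnj z)"
    by (simp add: cnj_zeta2 power2_eq_square)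
  then show ?thesis
    unfolding star_def by (simp only: assms)
qed

lemma deriv_zero_of_rotation:
  assumes f: "f holomorphic_on UNIV" and rot: "\<And>z. f (c * z) = \<mu> * f z" and "\<mu> \<noteq> c"
  shows "deriv f 0 = 0"
proof -
  have f': "(f has_field_derivative deriv f z) (at z)" for z
    using f by (auto intro: holomorphic_derivI)
  have "(f has_field_derivative deriv f 0) (at (c * 0))"
    using f'[of 0] by simp
  moreover have "((\<lambda>z. c * z) has_field_derivative c) (at 0)"
    by (auto intro!: derivative_eq_intros)
  ultimately have "((\<lambda>z. f (c * z)) has_field_derivative deriv f 0 * c) (at 0)"
    by (rule DERIV_chain2)
  moreover have "((\<lambda>z. f (c * z)) has_field_derivative \<mu> * deriv f 0) (at 0)"
    unfolding rot by (rule DERIV_cmult[OF f'])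
  ultimately have "deriv f 0 * c = \<mu> * deriv f 0"
    by (rule DERIV_unique)
  with \<open>\<mu> \<noteq> c\<close> show ?thesis
    by (simp add: mult.commute)
qed

lemma entire_factor_z:
  assumes f: "f holomorphic_on UNIV" and "f 0 = 0"
  shows "\<exists>g. g holomorphic_on UNIV \<and> (\<forall>z. f z = z * g z) \<and> g 0 = deriv f 0"
proof (intro exI conjI allI)
  show "(\<lambda>z. if z = 0 then deriv f 0 else (f z - f 0) / (z - 0)) holomorphic_on UNIV"
    by (rule pole_lemma[OF f]) simp
qed (use \<open>f 0 = 0\<close> in auto)

definition d_like :: "(complex \<Rightarrow> complex) \<Rightarrow> bool" where
  "d_like f \<longleftrightarrow> f holomorphic_on UNIV \<and> exponential_type f \<and> (\<forall>z. f (zeta2 * z) = zeta2^2 * f z)"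

lemma d_like_add: "d_like f \<Longrightarrow> d_like g \<Longrightarrow> d_like (\<lambda>z. f z + g z)"
  unfolding d_like_def by (auto intro: holomorphic_intros exponential_type_add simp: algebra_simps)

lemma d_like_dfun: "d_like (\<lambda>z. dfun (c * z))"
  unfolding d_like_def
proof (intro conjI allI)
  show "(\<lambda>z. dfun (c * z)) holomorphic_on UNIV"
    by (intro holomorphic_intros)
  show "exponential_type (\<lambda>z. dfun (c * z))"
  proof (rule exponential_typeI)
    show "norm (dfun (c * z)) \<le> 1 * exp (norm c * norm z)" for z
      using norm_dfun_le[of "c * z"] by (simp add: norm_mult)
  qed
  show "dfun (c * (\<zeta> * z)) = \<zeta>^2 * dfun (c * z)" for z
    using dfun_rotate[of "c * z"] by (simp add: mult.left_commute)
qed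

lemma entire_factor_z_squared:
  assumes f: "f holomorphic_on UNIV" and "f 0 = 0" "deriv f 0 = 0"
  shows "\<exists>h. h holomorphic_on UNIV \<and> (\<forall>z. f z = z^2 * h z)"
proof -
  obtain g where g: "g holomorphic_on UNIV" "\<And>z. f z = z * g z" "g 0 = deriv f 0"
    using entire_factor_z[OF f \<open>f 0 = 0\<close>] by blast
  with \<open>deriv f 0 = 0\<close> obtain h where h: "h holomorphic_on UNIV" "\<And>z. g z = z * h z"
    using entire_factor_z[OF g(1)] by auto
  then show ?thesis
    using g(2) by (auto simp: power2_eq_square)
qed

lemma d_like_imp_zero:
  assumes "d_like f"
  shows "f 0 = 0" "deriv f 0 = 0"
proof -
  have f: "f holomorphic_on UNIV" and rot: "\<And>z. f (\<zeta> * z) = \<zeta>^2 * f z"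
    using assms by (auto simp: d_like_def)
  have "(\<zeta>^2 - 1) * f 0 = 0"
    using rot[of 0] by (simp add: algebra_simps)
  then show "f 0 = 0"
    using zeta2_sq_neq(2) by simp
  show "deriv f 0 = 0"
    by (rule deriv_zero_of_rotation[of f \<zeta> "\<zeta>^2", OF f rot zeta2_sq_neq(1)])
qed

lemma d_like_square_factor:
  assumes "d_like f"
  obtains h where "h holomorphic_on UNIV" "exponential_type h" "\<And>z. h (\<zeta> * z) = h z"
    "\<And>z. f z = z^2 * h z"
proof -
  have f: "f holomorphic_on UNIV" "exponential_type f" and rot: "\<And>z. f (\<zeta> * z) = \<zeta>^2 * f z"
    using assms by (auto simp: d_like_def)
  obtain h where h: "h holomorphic_on UNIV" and fh: "\<And>z. f z = z^2 * h z"
    using entire_factor_z_squared[OF f(1) d_like_imp_zero[OF assms]] by blast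
  have "exponential_type h"
    using f(2) holomorphic_on_imp_continuous_on[OF h] fh by (rule exponential_type_of_square_factor)
  moreover have "h (\<zeta> * z) = h z" for z
  proof (cases "z = 0")
    case False
    have "(\<zeta> * z)^2 * h (\<zeta> * z) = \<zeta>^2 * (z^2 * h z)"
      using rot[of z] unfolding fh .
    then have "(\<zeta> * z)^2 * h (\<zeta> * z) = (\<zeta> * z)^2 * h z"
      by (simp only: power_mult_distrib mult.assoc)
    moreover have "(\<zeta> * z)^2 \<noteq> 0"
      using False zeta2_neq_0 by simp
    ultimately show ?thesis
      by simp
  qed simp
  ultimately show ?thesis
    using that h fh by blast
qed

section \<open>Integrals depending on a complex parameter\<close>

lemma integrable_mult_bounded:
  fixes g k :: "'a \<Rightarrow> complex"
  assumes g: "integrable M g" and k: "k \<in> borel_measurable M"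
    and bound: "\<And>w. w \<in> space M \<Longrightarrow> g w \<noteq> 0 \<Longrightarrow> norm (k w) \<le> B"
  shows "integrable M (\<lambda>w. g w * k w)"
proof (rule Bochner_Integration.integrable_bound)
  show "integrable M (\<lambda>w. B * norm (g w))"
    using g by auto
  show "(\<lambda>w. g w * k w) \<in> borel_measurable M"
    using g k by (auto intro: borel_measurable_integrable)
  have "norm (g w * k w) \<le> B * norm (g w)" if "w \<in> space M" for w
    using bound[OF that] by (cases "g w = 0") (auto simp: norm_mult mult.commute intro: mult_left_mono)
  then show "AE w in M. norm (g w * k w) \<le> norm (B * norm (g w))"
    by (intro AE_I2) (auto intro: order_trans[OF _ abs_ge_self])
qed

lemma norm_integral_mult_le:
  fixes g k :: "'a \<Rightarrow> complex"
  assumes g: "integrable M g" and k: "k \<in> borel_measurable M"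
    and bound: "\<And>w. w \<in> space M \<Longrightarrow> g w \<noteq> 0 \<Longrightarrow> norm (k w) \<le> B"
  shows "norm (\<integral>w. g w * k w \<partial>M) \<le> B * (\<integral>w. norm (g w) \<partial>M)"
proof -
  have "norm (\<integral>w. g w * k w \<partial>M) \<le> (\<integral>w. norm (g w * k w) \<partial>M)"
    by (rule integral_norm_bound)
  also have "\<dots> \<le> (\<integral>w. B * norm (g w) \<partial>M)"
  proof (rule integral_mono)
    show "integrable M (\<lambda>w. norm (g w * k w))"
      using integrable_mult_bounded[OF g k bound] by auto
    show "integrable M (\<lambda>w. B * norm (g w))"
      using g by auto
    show "norm (g w * k w) \<le> B * norm (g w)" if "w \<in> space M" for w
      using bound[OF that] by (cases "g w = 0") (auto simp: norm_mult mult.commute intro: mult_left_mono)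
  qed
  finally show ?thesis
    by simp
qed

lemma norm_exp_mult_le:
  fixes p z :: complex
  assumes "norm p \<le> R"
  shows "norm (exp (z * p)) \<le> exp (norm z * R)"
  using norm_exp[of "z * p"] assms
  by (meson exp_le_cancel_iff mult_left_mono norm_ge_zero norm_mult_ineq order_trans)

lemma norm_exp_remainder_le:
  fixes p h z0 :: complex
  assumes "norm p \<le> R" "norm h \<le> 1"
  shows "norm (exp (z0 * p) * (exp (h * p) - 1 - h * p)) \<le> exp ((norm z0 + 1) * R) * (norm h ^ 2 * R^2)"
proof -
  have "0 \<le> R"
    using assms(1) norm_ge_zero order_trans by blast
  have hp: "norm (h * p) \<le> norm h * R"
    using assms(1) by (simp add: norm_mult mult_left_mono)
  have "norm (exp (h * p) - 1 - h * p) \<le> exp (norm (h * p)) * norm (h * p) ^ 2"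
    using Taylor_exp_field[of "h * p" 1] by (simp add: power2_eq_square diff_diff_eq)
  also have "\<dots> \<le> exp R * (norm h * R) ^ 2"
  proof (rule mult_mono)
    have "norm h * R \<le> R"
      using assms(2) \<open>0 \<le> R\<close> by (simp add: mult_left_le_one_le)
    then show "exp (norm (h * p)) \<le> exp R"
      using hp by simp
    show "norm (h * p) ^ 2 \<le> (norm h * R) ^ 2"
      using hp by (simp add: power_mono)
  qed auto
  finally have "norm (exp (z0 * p) * (exp (h * p) - 1 - h * p)) \<le> exp (norm z0 * R) * (exp R * (norm h * R) ^ 2)"
    unfolding norm_mult using norm_exp_mult_le[OF assms(1), of z0] by (intro mult_mono) auto
  also have "\<dots> = exp ((norm z0 + 1) * R) * (norm h ^ 2 * R^2)"
    by (simp add: distrib_right exp_add power_mult_distrib)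
  finally show ?thesis .
qed

context
  fixes M :: "'a measure" and g \<psi> :: "'a \<Rightarrow> complex" and R :: real
  assumes g: "integrable M g" and \<psi>[measurable]: "\<psi> \<in> borel_measurable M"
    and bound: "\<And>w. w \<in> space M \<Longrightarrow> g w \<noteq> 0 \<Longrightarrow> norm (\<psi> w) \<le> R"
begin

lemma integrable_mult_exp:
  "integrable M (\<lambda>w. g w * exp (z * \<psi> w))"
  "integrable M (\<lambda>w. g w * (\<psi> w * exp (z * \<psi> w)))"
proof -
  show "integrable M (\<lambda>w. g w * exp (z * \<psi> w))"
    using norm_exp_mult_le[OF bound] by (intro integrable_mult_bounded[OF g]) auto
  show "integrable M (\<lambda>w. g w * (\<psi> w * exp (z * \<psi> w)))"
  proof (rule integrable_mult_bounded[OF g])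
    show "norm (\<psi> w * exp (z * \<psi> w)) \<le> R * exp (norm z * R)" if "w \<in> space M" "g w \<noteq> 0" for w
      unfolding norm_mult using bound[OF that] norm_exp_mult_le[OF bound[OF that]]
      by (intro mult_mono) (auto intro: order_trans[OF norm_ge_zero])
  qed measurable
qed

lemma norm_integral_exp_taylor_le:
  assumes "norm h \<le> 1"
  shows "norm ((\<integral>w. g w * exp ((z0 + h) * \<psi> w) \<partial>M) - (\<integral>w. g w * exp (z0 * \<psi> w) \<partial>M)
      - h * (\<integral>w. g w * (\<psi> w * exp (z0 * \<psi> w)) \<partial>M))
    \<le> (\<integral>w. norm (g w) \<partial>M) * exp ((norm z0 + 1) * R) * R^2 * norm h ^ 2"
proof -
  have "(\<integral>w. g w * exp ((z0 + h) * \<psi> w) \<partial>M) - (\<integral>w. g w * exp (z0 * \<psi> w) \<partial>M)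
      - h * (\<integral>w. g w * (\<psi> w * exp (z0 * \<psi> w)) \<partial>M)
      = (\<integral>w. g w * exp ((z0 + h) * \<psi> w) - g w * exp (z0 * \<psi> w) - h * (g w * (\<psi> w * exp (z0 * \<psi> w))) \<partial>M)"
    using integrable_mult_exp by simp
  also have "\<dots> = (\<integral>w. g w * (exp (z0 * \<psi> w) * (exp (h * \<psi> w) - 1 - h * \<psi> w)) \<partial>M)"
    by (rule Bochner_Integration.integral_cong) (simp_all add: algebra_simps distrib_right exp_add)
  also have "norm \<dots> \<le> exp ((norm z0 + 1) * R) * (norm h ^ 2 * R^2) * (\<integral>w. norm (g w) \<partial>M)"
  proof (rule norm_integral_mult_le[OF g])
    show "norm (exp (z0 * \<psi> w) * (exp (h * \<psi> w) - 1 - h * \<psi> w))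
        \<le> exp ((norm z0 + 1) * R) * (norm h ^ 2 * R^2)" if "w \<in> space M" "g w \<noteq> 0" for w
      using bound[OF that] assms by (rule norm_exp_remainder_le)
  qed measurable
  finally show ?thesis
    by (simp add: mult_ac)
qed

lemma has_field_derivative_integral_exp:
  "((\<lambda>z. \<integral>w. g w * exp (z * \<psi> w) \<partial>M) has_field_derivative
      (\<integral>w. g w * (\<psi> w * exp (z0 * \<psi> w)) \<partial>M)) (at z0)"
proof -
  define I where "I z = (\<integral>w. g w * exp (z * \<psi> w) \<partial>M)" for z
  define J where "J = (\<integral>w. g w * (\<psi> w * exp (z0 * \<psi> w)) \<partial>M)"
  define C where "C = (\<integral>w. norm (g w) \<partial>M) * exp ((norm z0 + 1) * R) * R^2"
  have "norm ((I z - I z0) / (z - z0) - J) \<le> C * norm (z - z0)" if "z \<noteq> z0" "norm (z - z0) < 1" for z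
  proof -
    have "norm (I z - I z0 - (z - z0) * J) \<le> C * norm (z - z0) ^ 2"
      using norm_integral_exp_taylor_le[of "z - z0" z0] that(2) by (simp add: I_def J_def C_def)
    moreover have "(I z - I z0) / (z - z0) - J = (I z - I z0 - (z - z0) * J) / (z - z0)"
      using that(1) by (simp add: field_simps)
    ultimately show ?thesis
      using that(1) by (simp add: norm_divide divide_le_eq power2_eq_square mult.assoc)
  qed
  then have "\<forall>\<^sub>F z in at z0. norm ((I z - I z0) / (z - z0) - J) \<le> C * norm (z - z0)"
    unfolding eventually_at by (intro exI[of _ 1]) (auto simp: dist_norm)
  moreover have "((\<lambda>z. C * norm (z - z0)) \<longlongrightarrow> 0) (at z0)"
    by (auto intro!: tendsto_eq_intros)
  ultimately have "((\<lambda>z. (I z - I z0) / (z - z0) - J) \<longlongrightarrow> 0) (at z0)"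
    by (rule Lim_null_comparison)
  then show ?thesis
    unfolding has_field_derivative_iff I_def J_def by (simp add: Lim_null[symmetric])
qed

end

section \<open>Transforms with kernel d\<close>

definition dtransform :: "'a measure \<Rightarrow> ('a \<Rightarrow> complex) \<Rightarrow> ('a \<Rightarrow> complex) \<Rightarrow> complex \<Rightarrow> complex" where
  "dtransform M g \<psi> z = (\<integral>w. g w * dfun (z * \<psi> w) \<partial>M)"

lemma dtransform_cnj: "cnj (dtransform M g \<psi> (cnj z)) = dtransform M (\<lambda>w. cnj (g w)) (\<lambda>w. cnj (\<psi> w)) z"
proof -
  have "cnj (dfun (cnj z * \<psi> w)) = dfun (z * cnj (\<psi> w))" for w
    using dfun_cnj[of "z * cnj (\<psi> w)"] by simp
  then show ?thesis
    unfolding dtransform_def by (simp flip: Bochner_Integration.integral_cnj)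
qed

locale bounded_kernel =
  fixes M :: "'a measure" and g \<psi> :: "'a \<Rightarrow> complex" and R :: real
  assumes integrable: "integrable M g"
    and measurable[measurable]: "\<psi> \<in> borel_measurable M"
    and bounded: "\<And>w. w \<in> space M \<Longrightarrow> g w \<noteq> 0 \<Longrightarrow> norm (\<psi> w) \<le> R"
begin

lemma norm_exp_bounded:
  assumes "w \<in> space M" "g w \<noteq> 0" "\<And>u. norm (k u) \<le> exp (norm u)"
  shows "norm (k (z * \<psi> w)) \<le> exp (norm z * R)"
proof -
  have "norm (z * \<psi> w) \<le> norm z * R"
    using bounded[OF assms(1,2)] by (simp add: norm_mult mult_left_mono)
  then show ?thesis
    using assms(3)[of "z * \<psi> w"] by (meson exp_le_cancel_iff order_trans)
qed

lemma integrable_kernel: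
  assumes "k \<in> borel_measurable borel" "\<And>u. norm (k u) \<le> exp (norm u)"
  shows "integrable M (\<lambda>w. g w * k (z * \<psi> w))"
proof (rule integrable_mult_bounded[OF integrable])
  show "(\<lambda>w. k (z * \<psi> w)) \<in> borel_measurable M"
    using assms(1) by measurable
  show "norm (k (z * \<psi> w)) \<le> exp (norm z * R)" if "w \<in> space M" "g w \<noteq> 0" for w
    by (rule norm_exp_bounded[OF that assms(2)])
qed

lemma norm_dtransform_le: "norm (dtransform M g \<psi> z) \<le> exp (norm z * R) * (\<integral>w. norm (g w) \<partial>M)"
  unfolding dtransform_def
proof (rule norm_integral_mult_le[OF integrable])
  show "(\<lambda>w. dfun (z * \<psi> w)) \<in> borel_measurable M"
    by measurable
  show "norm (dfun (z * \<psi> w)) \<le> exp (norm z * R)" if "w \<in> space M" "g w \<noteq> 0" for w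
    by (rule norm_exp_bounded[OF that norm_dfun_le])
qed

lemma dtransform_rotate: "dtransform M g \<psi> (\<zeta> * z) = \<zeta>^2 * dtransform M g \<psi> z"
proof -
  have "dtransform M g \<psi> (\<zeta> * z) = (\<integral>w. \<zeta>^2 * (g w * dfun (z * \<psi> w)) \<partial>M)"
    unfolding dtransform_def using dfun_rotate[of "z * \<psi> _"] by (simp add: mult_ac)
  then show ?thesis
    unfolding dtransform_def by simp
qed

text \<open>Expanding d into exponentials reduces holomorphy to differentiation under the integral.\<close>
lemma holomorphic_dtransform: "dtransform M g \<psi> holomorphic_on UNIV"
proof -
  define I where "I c z = (\<integral>w. g w * exp (z * (\<psi> w * c)) \<partial>M)" for c z
  have holo_I: "I c holomorphic_on UNIV" if "norm c = 1" for c
  proof -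
    have m: "(\<lambda>w. \<psi> w * c) \<in> borel_measurable M"
      by measurable
    have b: "\<And>w. w \<in> space M \<Longrightarrow> g w \<noteq> 0 \<Longrightarrow> norm (\<psi> w * c) \<le> R"
      using bounded that by (simp add: norm_mult)
    show ?thesis
      using has_field_derivative_integral_exp[OF integrable m b]
      unfolding holomorphic_on_def field_differentiable_def I_def
      by (auto simp: has_field_derivative_at_within)
  qed
  have int_I: "integrable M (\<lambda>w. g w * exp (z * (\<psi> w * c)))" if "norm c = 1" for c z
    using integrable_kernel[of "\<lambda>u. exp (u * c)" z] that norm_exp[of "_ * c"]
    by (simp add: norm_mult mult.assoc)
  have eq: "dtransform M g \<psi> = (\<lambda>z. (I 1 z + \<zeta> * I \<zeta> z + \<zeta>^2 * I (\<zeta>^2) z) / 3)"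
  proof
    fix z
    have "dtransform M g \<psi> z = (\<integral>w. (g w * exp (z * (\<psi> w * 1)) + \<zeta> * (g w * exp (z * (\<psi> w * \<zeta>)))
        + \<zeta>^2 * (g w * exp (z * (\<psi> w * \<zeta>^2)))) / 3 \<partial>M)"
      unfolding dtransform_def dfun_altdef by (simp add: algebra_simps)
    also have "\<dots> = (I 1 z + \<zeta> * I \<zeta> z + \<zeta>^2 * I (\<zeta>^2) z) / 3"
      unfolding I_def using int_I[of 1 z] int_I[of \<zeta> z] int_I[of "\<zeta>^2" z]
      by (simp add: norm_zeta2 norm_power)
    finally show "dtransform M g \<psi> z = (I 1 z + \<zeta> * I \<zeta> z + \<zeta>^2 * I (\<zeta>^2) z) / 3" .
  qed
  show ?thesis
    unfolding eq using holo_I[of 1] holo_I[of \<zeta>] holo_I[of "\<zeta>^2"]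
    by (intro holomorphic_intros) (auto simp: norm_zeta2 norm_power)
qed

lemma d_like_dtransform: "d_like (dtransform M g \<psi>)"
  unfolding d_like_def
proof (intro conjI allI holomorphic_dtransform dtransform_rotate)
  show "exponential_type (dtransform M g \<psi>)"
    using norm_dtransform_le
    by (intro exponential_typeI[of _ "\<integral>w. norm (g w) \<partial>M" R]) (simp add: mult_ac)
qed

end

section \<open>The potential v and its transforms\<close>

lemma integrable_product_pair:
  fixes a b :: "real \<Rightarrow> complex" and k :: "real \<times> real \<Rightarrow> complex"
  assumes a: "integrable lborel a" and b: "integrable lborel b"
    and k: "k \<in> borel_measurable (lborel \<Otimes>\<^sub>M lborel)" and k_bound: "\<And>p. norm (k p) \<le> 1"
  shows "integrable (lborel \<Otimes>\<^sub>M lborel) (\<lambda>p. a (fst p) * b (snd p) * k p)"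
proof -
  have [measurable]: "a \<in> borel_measurable lborel" "b \<in> borel_measurable lborel"
    using a b by (simp_all add: borel_measurable_integrable)
  have "integrable (lborel \<Otimes>\<^sub>M lborel) (\<lambda>p. norm (a (fst p)) * norm (b (snd p)))"
  proof (rule lborel_pair.Fubini_integrable)
    show "(\<lambda>p. norm (a (fst p)) * norm (b (snd p))) \<in> borel_measurable (lborel \<Otimes>\<^sub>M lborel)"
      by measurable
    show "integrable lborel (\<lambda>x. \<integral>y. norm (norm (a (fst (x, y))) * norm (b (snd (x, y)))) \<partial>lborel)"
      using a by (simp add: abs_mult)
    show "AE x in lborel. integrable lborel (\<lambda>y. norm (a (fst (x, y))) * norm (b (snd (x, y))))"
      using b by auto
  qed
  then show ?thesis
  proof (rule Bochner_Integration.integrable_bound)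
    show "(\<lambda>p. a (fst p) * b (snd p) * k p) \<in> borel_measurable (lborel \<Otimes>\<^sub>M lborel)"
      using k by measurable
    have "norm (a (fst p) * b (snd p) * k p) \<le> norm (a (fst p)) * norm (b (snd p))" for p
      using mult_left_mono[OF k_bound, of "norm (a (fst p)) * norm (b (snd p))"] by (simp add: norm_mult)
    then show "AE p in lborel \<Otimes>\<^sub>M lborel. norm (a (fst p) * b (snd p) * k p) \<le> norm (norm (a (fst p)) * norm (b (snd p)))"
      by simp
  qed
qed

lemma integral_product_pair:
  fixes a b :: "real \<Rightarrow> complex"
  assumes a: "integrable lborel a" and b: "integrable lborel b"
  shows "(\<integral>p. a (fst p) * b (snd p) \<partial>(lborel \<Otimes>\<^sub>M lborel)) = (\<integral>x. a x \<partial>lborel) * (\<integral>y. b y \<partial>lborel)"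
proof -
  have "integrable (lborel \<Otimes>\<^sub>M lborel) (\<lambda>p. a (fst p) * b (snd p) * 1)"
    by (rule integrable_product_pair[OF a b]) auto
  then show ?thesis
    using lborel_pair.integral_fst'[of "\<lambda>p. a (fst p) * b (snd p)"] by simp
qed

lemma bounded_kernel_on_interval:
  assumes "integrable lborel g" "\<And>x. g x \<noteq> 0 \<Longrightarrow> x \<in> {0..l}"
    and "\<psi> \<in> borel_measurable lborel" "\<And>x. x \<in> {0..l} \<Longrightarrow> norm (\<psi> x) \<le> l"
  shows "bounded_kernel lborel g \<psi> l"
  using assms by unfold_locales auto

locale potential =
  fixes l :: real and v :: "real \<Rightarrow> complex"
  assumes l_pos: "0 < l"
    and v_measurable: "set_borel_measurable lborel {0..l} v"
    and v_square_integrable: "set_integrable lborel {0..l} (\<lambda>x. (norm (v x))^2)"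
begin

definition V :: "real \<Rightarrow> complex" where
  "V x = indicator {0..l} x *\<^sub>R v x"

lemma V_measurable[measurable]: "V \<in> borel_measurable lborel"
  using v_measurable unfolding set_borel_measurable_def V_def[abs_def] .

lemma V_support: "V x \<noteq> 0 \<Longrightarrow> x \<in> {0..l}"
  by (auto simp: V_def indicator_def split: if_splits)

text \<open>On an interval of finite length, square integrability gives integrability, by
  \<open>|v| \<le> 1 + |v|\<^sup>2\<close>.\<close>
lemma integrable_V: "integrable lborel V"
proof (rule Bochner_Integration.integrable_bound)
  have "emeasure lborel {0..l} < \<infinity>"
    using l_pos by simp
  then show "integrable lborel (\<lambda>x. indicator {0..l} x + indicator {0..l} x *\<^sub>R (norm (v x))^2 :: real)"
    using v_square_integrable unfolding set_integrable_def
    by (intro Bochner_Integration.integrable_add integrable_real_indicator) auto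
  show "V \<in> borel_measurable lborel"
    by measurable
  have "norm (v x) \<le> 1 + (norm (v x))^2" for x
  proof -
    have "0 \<le> (norm (v x) - 1)^2"
      by simp
    then have "2 * norm (v x) \<le> 1 + (norm (v x))^2"
      by (simp add: power2_eq_square algebra_simps)
    then show ?thesis
      using norm_ge_zero[of "v x"] by linarith
  qed
  then show "AE x in lborel. norm (V x) \<le> norm (indicator {0..l} x + indicator {0..l} x *\<^sub>R (norm (v x))^2 :: real)"
    by (intro AE_I2) (auto simp: V_def split: split_indicator)
qed

lemma set_integral_eq_V:
  "(LINT x:{0..l}|lborel. v x * K x) = (\<integral>x. V x * K x \<partial>lborel)"
  "(LINT x:{0..l}|lborel. K x * v x) = (\<integral>x. V x * K x \<partial>lborel)"
  unfolding set_lebesgue_integral_def V_def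
  by (auto intro!: Bochner_Integration.integral_cong split: split_indicator)

lemma bounded_kernel_V:
  assumes "\<psi> \<in> borel_measurable lborel" "\<And>x. x \<in> {0..l} \<Longrightarrow> norm (\<psi> x) \<le> l"
  shows "bounded_kernel lborel V \<psi> l" "bounded_kernel lborel (\<lambda>x. cnj (V x)) \<psi> l"
proof -
  show "bounded_kernel lborel V \<psi> l"
    by (rule bounded_kernel_on_interval[OF integrable_V V_support assms])
  show "bounded_kernel lborel (\<lambda>x. cnj (V x)) \<psi> l"
    using integrable_V V_support assms by (intro bounded_kernel_on_interval) auto
qed

lemma bounded_kernel_V_linear:
  assumes "norm c = 1"
  shows "bounded_kernel lborel V (\<lambda>x. c * of_real x) l"
    "bounded_kernel lborel (\<lambda>x. cnj (V x)) (\<lambda>x. c * of_real x) l"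
    "bounded_kernel lborel (\<lambda>x. cnj (V x)) (\<lambda>x. c * of_real (l - x)) l"
  using assms by (auto intro!: bounded_kernel_V simp: norm_mult simp del: of_real_diff)

definition vtilde :: "(complex \<Rightarrow> complex) \<Rightarrow> complex \<Rightarrow> complex" where
  "vtilde k z = (\<integral>x. V x * k (z * (- \<i> * of_real x)) \<partial>lborel)"

definition vtilde_star :: "(complex \<Rightarrow> complex) \<Rightarrow> complex \<Rightarrow> complex" where
  "vtilde_star k z = (\<integral>x. cnj (V x) * k (z * (\<i> * of_real x)) \<partial>lborel)"

lemma integrable_vtilde:
  "integrable lborel (\<lambda>x. V x * cfun (z * (- \<i> * of_real x)))"
  "integrable lborel (\<lambda>x. V x * sfun (z * (- \<i> * of_real x)))"
  "integrable lborel (\<lambda>x. V x * dfun (z * (- \<i> * of_real x)))"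
  "integrable lborel (\<lambda>x. cnj (V x) * cfun (z * (\<i> * of_real x)))"
  "integrable lborel (\<lambda>x. cnj (V x) * sfun (z * (\<i> * of_real x)))"
  "integrable lborel (\<lambda>x. cnj (V x) * dfun (z * (\<i> * of_real x)))"
  using bounded_kernel.integrable_kernel[OF bounded_kernel_V_linear(1)[of "- \<i>"]]
    bounded_kernel.integrable_kernel[OF bounded_kernel_V_linear(2)[of \<i>]]
  by (auto simp: norm_cfun_le norm_sfun_le norm_dfun_le)

lemma vs_eq: "vs l v z = vtilde sfun z"
  and vd_eq: "vd l v z = vtilde dfun z"
  unfolding vs_def vd_def vtilde_def set_integral_eq_V by (simp_all add: mult_ac)

lemma star_vtilde:
  assumes "\<And>u. cnj (k (cnj u)) = k u"
  shows "star (vtilde k) z = vtilde_star k z"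
proof -
  have "cnj (k (cnj z * (- \<i> * of_real x))) = k (z * (\<i> * of_real x))" for x
    using assms[of "z * (\<i> * of_real x)"] by simp
  then show ?thesis
    unfolding star_def vtilde_def vtilde_star_def by (simp flip: Bochner_Integration.integral_cnj)
qed

lemma star_vs: "star (vs l v) z = vtilde_star sfun z"
  and star_vd: "star (vd l v) z = vtilde_star dfun z"
  unfolding vs_eq[abs_def] vd_eq[abs_def] by (simp_all add: star_vtilde sfun_cnj dfun_cnj)

lemma integral_sfun_l_minus:
  "(LINT t:{0..l}|lborel. sfun (\<i> * z * (l - t)) * v t) =
     cfun (\<i> * z * l) * vtilde sfun z + sfun (\<i> * z * l) * vtilde cfun z + dfun (\<i> * z * l) * vtilde dfun z"
  and integral_dfun_l_minus:
  "(LINT t:{0..l}|lborel. dfun (\<i> * z * (l - t)) * v t) =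
     cfun (\<i> * z * l) * vtilde dfun z + dfun (\<i> * z * l) * vtilde cfun z + sfun (\<i> * z * l) * vtilde sfun z"
proof -
  have split: "\<i> * z * complex_of_real (l - t) = \<i> * z * l + z * (- \<i> * t)" for t
    by (simp add: algebra_simps)
  have "(LINT t:{0..l}|lborel. sfun (\<i> * z * (l - t)) * v t) =
    (\<integral>t. cfun (\<i> * z * l) * (V t * sfun (z * (- \<i> * t))) + sfun (\<i> * z * l) * (V t * cfun (z * (- \<i> * t)))
        + dfun (\<i> * z * l) * (V t * dfun (z * (- \<i> * t))) \<partial>lborel)"
    unfolding set_integral_eq_V split sfun_add by (simp add: algebra_simps)
  then show "(LINT t:{0..l}|lborel. sfun (\<i> * z * (l - t)) * v t) =
     cfun (\<i> * z * l) * vtilde sfun z + sfun (\<i> * z * l) * vtilde cfun z + dfun (\<i> * z * l) * vtilde dfun z"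
    unfolding vtilde_def using integrable_vtilde by simp
  have "(LINT t:{0..l}|lborel. dfun (\<i> * z * (l - t)) * v t) =
    (\<integral>t. cfun (\<i> * z * l) * (V t * dfun (z * (- \<i> * t))) + dfun (\<i> * z * l) * (V t * cfun (z * (- \<i> * t)))
        + sfun (\<i> * z * l) * (V t * sfun (z * (- \<i> * t))) \<partial>lborel)"
    unfolding set_integral_eq_V split dfun_add by (simp add: algebra_simps)
  then show "(LINT t:{0..l}|lborel. dfun (\<i> * z * (l - t)) * v t) =
     cfun (\<i> * z * l) * vtilde dfun z + dfun (\<i> * z * l) * vtilde cfun z + sfun (\<i> * z * l) * vtilde sfun z"
    unfolding vtilde_def using integrable_vtilde by simp
qed

lemma wd_eq: "wd l v z = (\<integral>t. V t * dfun (- \<i> * z * of_real (l - t)) \<partial>lborel)"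
proof -
  let ?f = "\<lambda>x. indicator {0..l} x *\<^sub>R (v (l - x) * dfun (- \<i> * z * of_real x))"
  have "wd l v z = (\<integral>x. ?f x \<partial>lborel)"
    unfolding wd_def vd_def set_lebesgue_integral_def ..
  also have "\<dots> = (\<integral>x. ?f (l + (-1) * x) \<partial>lborel)"
    using lborel_integral_real_affine[of "-1" ?f l] by simp
  also have "\<dots> = (\<integral>t. V t * dfun (- \<i> * z * of_real (l - t)) \<partial>lborel)"
    unfolding V_def by (rule Bochner_Integration.integral_cong) (auto split: split_indicator)
  finally show ?thesis .
qed

lemma wd_minus: "wd l v (- z) = (LINT t:{0..l}|lborel. dfun (\<i> * z * (l - t)) * v t)"
  unfolding wd_eq set_integral_eq_V by simp

lemma star_wd_minus:
  "star (wd l v) (- z) = vtilde_star cfun z * dfun (- (\<i> * z * l)) + vtilde_star dfun z * cfun (- (\<i> * z * l))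
     + vtilde_star sfun z * sfun (- (\<i> * z * l))"
proof -
  have split: "- \<i> * (- cnj z) * of_real (l - t) = cnj (z * (\<i> * t) + (- (\<i> * z * l)))" for t
    by (simp add: algebra_simps)
  have "star (wd l v) (- z) = (\<integral>t. cnj (V t * dfun (- \<i> * (- cnj z) * of_real (l - t))) \<partial>lborel)"
    unfolding star_def wd_eq by (simp only: Bochner_Integration.integral_cnj complex_cnj_minus)
  also have "\<dots> = (\<integral>t. dfun (- (\<i> * z * l)) * (cnj (V t) * cfun (z * (\<i> * t)))
      + cfun (- (\<i> * z * l)) * (cnj (V t) * dfun (z * (\<i> * t)))
      + sfun (- (\<i> * z * l)) * (cnj (V t) * sfun (z * (\<i> * t))) \<partial>lborel)"
    unfolding split dfun_cnj dfun_add complex_cnj_mult by (simp add: algebra_simps)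
  also have "\<dots> = vtilde_star cfun z * dfun (- (\<i> * z * l)) + vtilde_star dfun z * cfun (- (\<i> * z * l))
     + vtilde_star sfun z * sfun (- (\<i> * z * l))"
    unfolding vtilde_star_def using integrable_vtilde by (simp add: mult.commute)
  finally show ?thesis .
qed

abbreviation lborel2 :: "(real \<times> real) measure" where
  "lborel2 \<equiv> lborel \<Otimes>\<^sub>M lborel"

definition pair_kernel :: "(real \<times> real \<Rightarrow> complex) \<Rightarrow> real \<times> real \<Rightarrow> complex" where
  "pair_kernel k p = cnj (V (fst p)) * V (snd p) * k p"

definition pair_phase :: "real \<times> real \<Rightarrow> complex" where
  "pair_phase p = \<i> * of_real (fst p - snd p)"

definition lower :: "real \<times> real \<Rightarrow> complex" where
  "lower p = (if snd p \<le> fst p then 1 else 0)"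

definition upper :: "real \<times> real \<Rightarrow> complex" where
  "upper p = (if fst p \<le> snd p then 1 else 0)"

lemma lower_upper_measurable: "lower \<in> borel_measurable lborel2" "upper \<in> borel_measurable lborel2"
  unfolding lower_def[abs_def] upper_def[abs_def] by measurable

lemma bounded_kernel_pair:
  assumes "k \<in> borel_measurable lborel2" "\<And>p. norm (k p) \<le> 1"
  shows "bounded_kernel lborel2 (pair_kernel k) pair_phase l"
proof
  show "integrable lborel2 (pair_kernel k)"
    unfolding pair_kernel_def[abs_def]
    by (rule integrable_product_pair[OF _ integrable_V assms]) (simp add: integrable_V)
  show "pair_phase \<in> borel_measurable lborel2"
    unfolding pair_phase_def[abs_def] by measurable
  fix p assume "pair_kernel k p \<noteq> 0"
  then have "fst p \<in> {0..l}" "snd p \<in> {0..l}"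
    using V_support unfolding pair_kernel_def by auto
  then show "norm (pair_phase p) \<le> l"
    by (auto simp: pair_phase_def norm_mult simp del: of_real_diff)
qed

lemma bounded_kernel_lower: "bounded_kernel lborel2 (pair_kernel lower) pair_phase l"
  and bounded_kernel_upper: "bounded_kernel lborel2 (pair_kernel upper) pair_phase l"
  using lower_upper_measurable by (auto intro!: bounded_kernel_pair simp: lower_def upper_def)

lemma mfun_integrand_eq:
  "indicator {0..l} x *\<^sub>R (cnj (v x) * (\<integral>t. indicator {0..x} t *\<^sub>R (dfun (\<i> * z * (x - t)) * v t) \<partial>lborel))
     = (\<integral>t. pair_kernel lower (x, t) * dfun (z * pair_phase (x, t)) \<partial>lborel)"
proof (cases "x \<in> {0..l}")
  case True
  then have "(\<integral>t. pair_kernel lower (x, t) * dfun (z * pair_phase (x, t)) \<partial>lborel) =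
      (\<integral>t. cnj (v x) * (indicator {0..x} t *\<^sub>R (dfun (\<i> * z * (x - t)) * v t)) \<partial>lborel)"
    unfolding pair_kernel_def lower_def pair_phase_def V_def
    by (intro Bochner_Integration.integral_cong) (auto split: split_indicator simp: mult_ac)
  also have "\<dots> = cnj (v x) * (\<integral>t. indicator {0..x} t *\<^sub>R (dfun (\<i> * z * (x - t)) * v t) \<partial>lborel)"
    by (rule integral_mult_right_zero)
  finally show ?thesis
    using True by simp
next
  case False
  then have "V x = 0"
    using V_support by blast
  with False show ?thesis
    unfolding pair_kernel_def by simp
qed

lemma mfun_eq_dtransform: "mfun l v z = dtransform lborel2 (pair_kernel lower) pair_phase z"
proof -
  have "mfun l v z = (\<integral>x. (\<integral>t. pair_kernel lower (x, t) * dfun (z * pair_phase (x, t)) \<partial>lborel) \<partial>lborel)"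
    unfolding mfun_def set_lebesgue_integral_def mfun_integrand_eq ..
  also have "\<dots> = dtransform lborel2 (pair_kernel lower) pair_phase z"
    unfolding dtransform_def
    using lborel_pair.integral_fst'[OF bounded_kernel.integrable_kernel[OF bounded_kernel_lower]]
    by (simp add: norm_dfun_le)
  finally show ?thesis .
qed

lemma star_mfun_eq_dtransform: "star (mfun l v) z = dtransform lborel2 (pair_kernel upper) pair_phase z"
proof -
  have kernel: "pair_kernel lower \<in> borel_measurable lborel2"
    using bounded_kernel.integrable[OF bounded_kernel_lower] by (rule borel_measurable_integrable)
  have "continuous_on UNIV (\<lambda>u. dfun (z * cnj u))"
    by (rule continuous_on_compose2[OF continuous_on_dfun]) (auto intro!: continuous_intros)
  then have "(\<lambda>p. cnj (pair_kernel lower p) * dfun (z * cnj (pair_phase p))) \<in> borel_measurable lborel2"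
    using bounded_kernel.measurable[OF bounded_kernel_lower]
    by (intro borel_measurable_times borel_measurable_continuous_on[OF _ kernel]
        borel_measurable_continuous_on[of "\<lambda>u. dfun (z * cnj u)"]) (auto intro: continuous_intros)
  have "star (mfun l v) z = dtransform lborel2 (\<lambda>p. cnj (pair_kernel lower p)) (\<lambda>p. cnj (pair_phase p)) z"
    unfolding star_def mfun_eq_dtransform by (rule dtransform_cnj)
  also have "\<dots> = (\<integral>(x, y). cnj (pair_kernel lower (y, x)) * dfun (z * cnj (pair_phase (y, x))) \<partial>lborel2)"
    unfolding dtransform_def by (rule lborel_pair.integral_product_swap[symmetric]) fact
  also have "\<dots> = dtransform lborel2 (pair_kernel upper) pair_phase z"
    unfolding dtransform_def
    by (rule Bochner_Integration.integral_cong) (auto simp: pair_kernel_def lower_def upper_def pair_phase_def algebra_simps)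
  finally show ?thesis .
qed

lemma pair_kernel_lower_add_upper:
  "pair_kernel lower p * dfun (z * pair_phase p) + pair_kernel upper p * dfun (z * pair_phase p)
     = cnj (V (fst p)) * cfun (z * (\<i> * of_real (fst p))) * (V (snd p) * dfun (z * (- \<i> * of_real (snd p))))
     + cnj (V (fst p)) * dfun (z * (\<i> * of_real (fst p))) * (V (snd p) * cfun (z * (- \<i> * of_real (snd p))))
     + cnj (V (fst p)) * sfun (z * (\<i> * of_real (fst p))) * (V (snd p) * sfun (z * (- \<i> * of_real (snd p))))"
proof -
  have phase: "z * pair_phase p = z * (\<i> * of_real (fst p)) + z * (- \<i> * of_real (snd p))"
    unfolding pair_phase_def by (simp add: algebra_simps)
  have "pair_kernel lower p * dfun (z * pair_phase p) + pair_kernel upper p * dfun (z * pair_phase p)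
      = cnj (V (fst p)) * V (snd p) * dfun (z * pair_phase p)"
    by (cases "fst p = snd p") (auto simp: pair_kernel_def lower_def upper_def pair_phase_def dfun_0)
  then show ?thesis
    unfolding phase dfun_add by (simp add: algebra_simps)
qed

text \<open>The two triangles make up the square, on which \<open>d(i\<lambda>(x - t))\<close> splits by the addition
  theorem.\<close>
lemma mfun_add_star:
  "mfun l v z + star (mfun l v) z =
     vtilde_star cfun z * vtilde dfun z + vtilde_star dfun z * vtilde cfun z + vtilde_star sfun z * vtilde sfun z"
proof -
  let ?P = "\<lambda>k x. cnj (V x) * k (z * (\<i> * of_real x))" and ?Q = "\<lambda>k x. V x * k (z * (- \<i> * of_real x))"
  have product: "integrable lborel2 (\<lambda>p. ?P f (fst p) * ?Q g (snd p))"
    "(\<integral>p. ?P f (fst p) * ?Q g (snd p) \<partial>lborel2) = vtilde_star f z * vtilde g z"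
    if "integrable lborel (?P f)" "integrable lborel (?Q g)" for f g
    using integrable_product_pair[OF that, of "\<lambda>_. 1"] integral_product_pair[OF that]
    by (simp_all add: vtilde_def vtilde_star_def)
  have "mfun l v z + star (mfun l v) z =
      (\<integral>p. pair_kernel lower p * dfun (z * pair_phase p) + pair_kernel upper p * dfun (z * pair_phase p) \<partial>lborel2)"
    unfolding mfun_eq_dtransform star_mfun_eq_dtransform dtransform_def
    using bounded_kernel.integrable_kernel[OF bounded_kernel_lower, of dfun z]
      bounded_kernel.integrable_kernel[OF bounded_kernel_upper, of dfun z]
    by (simp add: norm_dfun_le)
  also have "\<dots> = vtilde_star cfun z * vtilde dfun z + vtilde_star dfun z * vtilde cfun z
      + vtilde_star sfun z * vtilde sfun z"
    unfolding pair_kernel_lower_add_upper using product integrable_vtilde by simp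
  finally show ?thesis .
qed

end

section \<open>The determinant\<close>

text \<open>Both sides of the determinant identity as rational functions of \<open>\<tilde>v\<^sub>k\<^sup>*\<close> (\<open>Pc, Ps, Pd\<close>),
  \<open>\<tilde>v\<^sub>k\<close> (\<open>Qc, Qs, Qd\<close>), m and \<open>c, s, d\<close> at \<open>i\<lambda>l\<close> (\<open>C, S, D\<close>); on the \<open>\<Delta>\<close> side, \<open>m\<^sup>*\<close> and the
  transforms of w have been eliminated.\<close>
definition det_form :: "complex \<Rightarrow> complex \<Rightarrow> complex \<Rightarrow> complex \<Rightarrow> complex \<Rightarrow> complex \<Rightarrow> complex \<Rightarrow> complex
    \<Rightarrow> complex \<Rightarrow> complex \<Rightarrow> complex \<Rightarrow> complex \<Rightarrow> complex" where
  "det_form a z Pc Ps Pd Qc Qs Qd m C S D =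
     (\<i>*Ps/z)*(\<i>*S/z)*(\<i>*a/z^2 * (C*Qd + D*Qc + S*Qs)) + (Pd/z^2)*(- (a/z) * (C*Qs + S*Qc + D*Qd))*(\<i>*S/z)
     + (1 + \<i>*a*m/z^2)*(1 - C)*(D/z^2) - (\<i>*Ps/z)*(- (a/z) * (C*Qs + S*Qc + D*Qd))*(D/z^2)
     - (Pd/z^2)*(1 - C)*(\<i>*a/z^2 * (C*Qd + D*Qc + S*Qs)) - (1 + \<i>*a*m/z^2)*(\<i>*S/z)*(\<i>*S/z)"

definition Delta_form :: "complex \<Rightarrow> complex \<Rightarrow> complex \<Rightarrow> complex \<Rightarrow> complex \<Rightarrow> complex \<Rightarrow> complex \<Rightarrow> complex
    \<Rightarrow> complex \<Rightarrow> complex \<Rightarrow> complex \<Rightarrow> complex \<Rightarrow> complex" where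
  "Delta_form a z Pc Ps Pd Qc Qs Qd m C S D =
     (D + (S^2 - C*D))/z^2 + \<i>*a/z^4 * ((m*D + Qd*(Pc*(S^2 - C*D) + Pd*(C^2 - S*D) + Ps*(D^2 - C*S)))
       - ((Pc*Qd + Pd*Qc + Ps*Qs - m)*(S^2 - C*D) + Pd*(C*Qd + D*Qc + S*Qs)))"

lemma det_form_eq_Delta_form:
  assumes "z \<noteq> 0"
  shows "det_form a z Pc Ps Pd Qc Qs Qd m C S D = Delta_form a z Pc Ps Pd Qc Qs Qd m C S D"
proof -
  define t where "t = inverse z"
  have "(\<i>*Ps*t)*(\<i>*S*t)*(\<i>*a*t^2 * (C*Qd + D*Qc + S*Qs)) + (Pd*t^2)*(- (a*t) * (C*Qs + S*Qc + D*Qd))*(\<i>*S*t)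
     + (1 + \<i>*a*m*t^2)*(1 - C)*(D*t^2) - (\<i>*Ps*t)*(- (a*t) * (C*Qs + S*Qc + D*Qd))*(D*t^2)
     - (Pd*t^2)*(1 - C)*(\<i>*a*t^2 * (C*Qd + D*Qc + S*Qs)) - (1 + \<i>*a*m*t^2)*(\<i>*S*t)*(\<i>*S*t)
   = (D + (S^2 - C*D))*t^2 + \<i>*a*t^4 * ((m*D + Qd*(Pc*(S^2 - C*D) + Pd*(C^2 - S*D) + Ps*(D^2 - C*S)))
       - ((Pc*Qd + Pd*Qc + Ps*Qs - m)*(S^2 - C*D) + Pd*(C*Qd + D*Qc + S*Qs)))"
    using power2_i by algebra
  then show ?thesis
    unfolding det_form_def Delta_form_def t_def divide_inverse power_inverse .
qed

lemma Delta_star: "cnj (Delta l v \<alpha> (cnj z)) = Delta l v \<alpha> z"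
proof -
  have "cnj (dfun (\<i> * cnj z * l)) = dfun (- \<i> * z * l)" "cnj (dfun (- \<i> * cnj z * l)) = dfun (\<i> * z * l)"
    using dfun_cnj[of "- \<i> * z * l"] dfun_cnj[of "\<i> * z * l"] by simp_all
  moreover have "cnj (Ffun l v (cnj z)) = star (Ffun l v) z" "cnj (star (Ffun l v) (cnj z)) = Ffun l v z"
    unfolding star_def by simp_all
  ultimately show ?thesis
    unfolding Delta_def Delta0_def
    by (simp only: complex_cnj_add complex_cnj_divide complex_cnj_mult complex_cnj_diff complex_cnj_power
       complex_cnj_cnj complex_cnj_i complex_cnj_complex_of_real)
      (simp add: algebra_simps; simp add: add_divide_distrib[symmetric])
qed

context potential
begin

lemma star_Ffun:
  "star (Ffun l v) z = star (mfun l v) z * dfun (- (\<i> * z * l)) + vtilde_star dfun z * wd l v (- z)"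
proof -
  have "cnj (dfun (\<i> * cnj z * l)) = dfun (- (\<i> * z * l))"
    using dfun_cnj[of "- (\<i> * z * l)"] by simp
  moreover have "cnj (star (wd l v) (- cnj z)) = wd l v (- z)"
    unfolding star_def by simp
  moreover have "cnj (vd l v (cnj z)) = vtilde_star dfun z"
    using star_vd[of z] unfolding star_def .
  ultimately show ?thesis
    unfolding Ffun_def star_def[of "Ffun l v"] by (simp add: star_def)
qed

abbreviation eval_transforms :: "(complex \<Rightarrow> complex \<Rightarrow> complex \<Rightarrow> complex \<Rightarrow> complex \<Rightarrow> complex \<Rightarrow> complex \<Rightarrow> complex
    \<Rightarrow> complex \<Rightarrow> complex \<Rightarrow> complex \<Rightarrow> complex) \<Rightarrow> complex \<Rightarrow> complex" where
  "eval_transforms F z \<equiv> F z (vtilde_star cfun z) (vtilde_star sfun z) (vtilde_star dfun z)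
     (vtilde cfun z) (vtilde sfun z) (vtilde dfun z) (mfun l v z) (cfun (\<i> * z * l)) (sfun (\<i> * z * l)) (dfun (\<i> * z * l))"

lemma det_coeff_matrix_eq_det_form: "det (coeff_matrix l v \<alpha> z) = eval_transforms (det_form \<alpha>) z"
  unfolding coeff_matrix_def det_3 det_form_def vector_3 star_vs star_vd of_real_diff[symmetric]
    integral_sfun_l_minus integral_dfun_l_minus
  by simp

lemma Delta_eq_Delta_form: "Delta l v \<alpha> z = eval_transforms (Delta_form \<alpha>) z"
proof -
  have star_m: "star (mfun l v) z = vtilde_star cfun z * vtilde dfun z + vtilde_star dfun z * vtilde cfun z
      + vtilde_star sfun z * vtilde sfun z - mfun l v z"
    using mfun_add_star[of z] by (simp add: algebra_simps)
  have minus: "- \<i> * z * l = - (\<i> * z * l)"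
    by simp
  show ?thesis
    unfolding Delta_def Delta0_def Ffun_def star_Ffun star_m vd_eq star_wd_minus wd_minus integral_dfun_l_minus
      minus cfun_minus sfun_minus dfun_minus Delta_form_def
    by simp
qed

theorem det_coeff_matrix_eq_Delta: "z \<noteq> 0 \<Longrightarrow> det (coeff_matrix l v \<alpha> z) = Delta l v \<alpha> z"
  unfolding det_coeff_matrix_eq_det_form Delta_eq_Delta_form by (rule det_form_eq_Delta_form)

end

section \<open>Analytic continuation of \<open>\<Delta>(\<alpha>, \<cdot>)\<close>\<close>

context potential
begin

lemma d_like_mfun: "d_like (mfun l v)"
  using bounded_kernel.d_like_dtransform[OF bounded_kernel_lower]
  by (simp add: mfun_eq_dtransform[abs_def])

lemma d_like_vd: "d_like (vd l v)"
proof -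
  have "vd l v = dtransform lborel V (\<lambda>x. - \<i> * of_real x)"
    by (simp add: fun_eq_iff vd_eq vtilde_def dtransform_def mult_ac)
  then show ?thesis
    using bounded_kernel.d_like_dtransform[OF bounded_kernel_V_linear(1)[of "- \<i>"]] by simp
qed

lemma d_like_star_wd_minus: "d_like (\<lambda>z. star (wd l v) (- z))"
proof -
  have "star (wd l v) (- z) = dtransform lborel (\<lambda>x. cnj (V x)) (\<lambda>t. - \<i> * of_real (l - t)) z" for z
  proof -
    have "star (wd l v) (- z) = (\<integral>t. cnj (V t * dfun (- \<i> * (- cnj z) * of_real (l - t))) \<partial>lborel)"
      unfolding star_def wd_eq by (simp only: Bochner_Integration.integral_cnj complex_cnj_minus)
    also have "\<dots> = dtransform lborel (\<lambda>x. cnj (V x)) (\<lambda>t. - \<i> * of_real (l - t)) z"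
      unfolding dtransform_def
    proof (rule Bochner_Integration.integral_cong[OF refl])
      fix t
      have "- \<i> * (- cnj z) * of_real (l - t) = cnj (z * (- \<i> * of_real (l - t)))"
        by simp
      then have "cnj (dfun (- \<i> * (- cnj z) * of_real (l - t))) = dfun (z * (- \<i> * of_real (l - t)))"
        by (simp only: dfun_cnj)
      then show "cnj (V t * dfun (- \<i> * (- cnj z) * of_real (l - t))) = cnj (V t) * dfun (z * (- \<i> * of_real (l - t)))"
        by simp
    qed
    finally show ?thesis .
  qed
  then show ?thesis
    using bounded_kernel.d_like_dtransform[OF bounded_kernel_V_linear(3)[of "- \<i>"]]
    by (simp add: fun_eq_iff[symmetric])
qed

lemma d_like_dfun_il: "d_like (\<lambda>z. dfun (c * z * l))"
  using d_like_dfun[of "c * l"] by (simp add: mult_ac)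

lemma Ffun_square_factor:
  obtains P where "P holomorphic_on UNIV" "exponential_type P" "\<And>z. P (\<zeta> * z) = P z"
    "\<And>z. Ffun l v z = z^4 * P z"
proof -
  obtain m where m: "m holomorphic_on UNIV" "exponential_type m" "\<And>z. m (\<zeta> * z) = m z"
    "\<And>z. mfun l v z = z^2 * m z"
    using d_like_square_factor[OF d_like_mfun] by blast
  obtain k where k: "k holomorphic_on UNIV" "exponential_type k" "\<And>z. k (\<zeta> * z) = k z"
    "\<And>z. dfun (\<i> * z * l) = z^2 * k z"
    using d_like_square_factor[OF d_like_dfun_il[of \<i>]] by blast
  obtain d where d: "d holomorphic_on UNIV" "exponential_type d" "\<And>z. d (\<zeta> * z) = d z"
    "\<And>z. vd l v z = z^2 * d z"
    using d_like_square_factor[OF d_like_vd] by blast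
  obtain w where w: "w holomorphic_on UNIV" "exponential_type w" "\<And>z. w (\<zeta> * z) = w z"
    "\<And>z. star (wd l v) (- z) = z^2 * w z"
    using d_like_square_factor[OF d_like_star_wd_minus] by blast
  show ?thesis
  proof
    show "(\<lambda>z. m z * k z + d z * w z) holomorphic_on UNIV"
      using m k d w by (intro holomorphic_intros) auto
    show "exponential_type (\<lambda>z. m z * k z + d z * w z)"
      using m k d w by (intro exponential_type_add exponential_type_mult) auto
    show "m (\<zeta> * z) * k (\<zeta> * z) + d (\<zeta> * z) * w (\<zeta> * z) = m z * k z + d z * w z" for z
      using m k d w by simp
    show "Ffun l v z = z^4 * (m z * k z + d z * w z)" for z
      unfolding Ffun_def m(4) k(4) d(4) w(4) by (simp add: algebra_simps eval_nat_numeral)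
  qed
qed

lemma Delta0_square_factor:
  obtains Q where "Q holomorphic_on UNIV" "exponential_type Q" "\<And>z. Q (\<zeta> * z) = Q z"
    "\<And>z. z \<noteq> 0 \<Longrightarrow> Delta0 l z = Q z"
proof -
  have "d_like (\<lambda>z. dfun (\<i> * z * l) + dfun (- \<i> * z * l))"
    by (intro d_like_add d_like_dfun_il)
  then obtain Q where Q: "Q holomorphic_on UNIV" "exponential_type Q" "\<And>z. Q (\<zeta> * z) = Q z"
    "\<And>z. dfun (\<i> * z * l) + dfun (- \<i> * z * l) = z^2 * Q z"
    using d_like_square_factor by blast
  show ?thesis
    by (rule that[OF Q(1-3)]) (unfold Delta0_def Q(4), simp)
qed

theorem Delta_entire_extension:
  "\<exists>D. D holomorphic_on UNIV \<and> (\<forall>z. z \<noteq> 0 \<longrightarrow> D z = Delta l v \<alpha> z) \<and> exponential_type D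
     \<and> (\<forall>z. D (\<zeta> * z) = D z) \<and> (\<forall>z. star D z = D z)"
proof -
  obtain P where P: "P holomorphic_on UNIV" "exponential_type P" "\<And>z. P (\<zeta> * z) = P z"
    "\<And>z. Ffun l v z = z^4 * P z"
    using Ffun_square_factor by blast
  obtain Q where Q: "Q holomorphic_on UNIV" "exponential_type Q" "\<And>z. Q (\<zeta> * z) = Q z"
    "\<And>z. z \<noteq> 0 \<Longrightarrow> Delta0 l z = Q z"
    using Delta0_square_factor by blast
  define D where "D z = Q z + \<i> * \<alpha> * (P z - star P z)" for z
  have star_F: "star (Ffun l v) z = z^4 * star P z" for z
    by (simp add: star_def P(4))
  have D_Delta: "D z = Delta l v \<alpha> z" if "z \<noteq> 0" for z
    using that by (simp add: D_def Delta_def Q(4) P(4) star_F field_simps)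
  have holo: "D holomorphic_on UNIV"
    unfolding D_def[abs_def] using P(1) Q(1) holomorphic_on_star[OF P(1)]
    by (intro holomorphic_intros) auto
  moreover have "exponential_type D"
    unfolding D_def[abs_def] using P(2) Q(2)
    by (intro exponential_type_add exponential_type_mult exponential_type_diff
        exponential_type_const exponential_type_star)
  moreover have "D (\<zeta> * z) = D z" for z
    using P(3) Q(3) star_rotate[of P] by (simp add: D_def)
  moreover have "star D z = D z" for z
  proof -
    have off_0: "star D z = D z" if "z \<noteq> 0" for z
      using that Delta_star[of l v \<alpha> z] by (simp add: star_def D_Delta)
    have "continuous_on UNIV (star D)" "continuous_on UNIV D"
      using holo holomorphic_on_star by (auto intro: holomorphic_on_imp_continuous_on)
    then have "star D 0 = D 0"
      using off_0 by (rule continuous_eq_at_point)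
    with off_0 show ?thesis
      by (cases "z = 0") auto
  qed
  ultimately show ?thesis
    using D_Delta by blast
qed

end

theorem lemma2p2:
  fixes l \<alpha> :: real and v :: "real \<Rightarrow> complex"
  assumes "0 < l"
    and "set_borel_measurable lborel {0..l} v"
    and "set_integrable lborel {0..l} (\<lambda>x. (norm (v x))^2)"
  shows "(\<forall>z. z \<noteq> 0 \<longrightarrow> det (coeff_matrix l v \<alpha> z) = Delta l v \<alpha> z)
       \<and> (\<exists>D. D holomorphic_on UNIV
             \<and> (\<forall>z. z \<noteq> 0 \<longrightarrow> D z = Delta l v \<alpha> z)
             \<and> (\<exists>A B. \<forall>z. norm (D z) \<le> A * exp (B * norm z))
             \<and> (\<forall>z. D (zeta2 * z) = D z)
             \<and> (\<forall>z. star D z = D z))"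
proof -
  interpret potential l v
    using assms by unfold_locales
  show ?thesis
    using det_coeff_matrix_eq_Delta Delta_entire_extension[of \<alpha>]
    unfolding exponential_type_def by blast
qed

end
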